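(* Let $n\ge3$, let $H$ be a non-trivial finitely generated abelian group, let $G$ be a group with a surjective homomorphism $\sigma\colon G\to S_n$, let $W=H\wr_\sigma G$, and let $\pi\colon W\to G$ be the canonical projection. Assume that every abelian normal subgroup of $W$ is contained in $H^n$, and that $P_\sigma=\ker\sigma$ is characteristic in $G$. Then $PW=\pi^{-1}(P_\sigma)\cong H^n\times P_\sigma$ is characteristic in $W$.
   Context: $H\wr_\sigma G=H^n\rtimes_\sigma G$ is the semidirect product in which $G$ acts on $H^n$ by permuting coordinates through $\sigma$: $g\cdot(h_1,\dots,h_n)=(h_{\sigma(g)(1)},\dots,h_{\sigma(g)(n)})$ (with the composition convention in $S_n$ making this a left action); $H^n$ is identified with $\{(\mathbf h,1)\}$ and $\pi(\mathbf h,g)=g$. *)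

theory Defs
  imports "HOL-Algebra.Algebra"
begin

definition pow_group :: "('h, 'a) monoid_scheme \<Rightarrow> nat \<Rightarrow> (nat \<Rightarrow> 'h) monoid" where
  "pow_group H n =
     \<lparr> carrier = {1..n} \<rightarrow>\<^sub>E carrier H,
       monoid.mult = (\<lambda>h h'. \<lambda>i\<in>{1..n}. h i \<otimes>\<^bsub>H\<^esub> h' i),
       monoid.one = (\<lambda>i\<in>{1..n}. \<one>\<^bsub>H\<^esub>) \<rparr>"

text \<open>G acts on H^n on the left by (g.h)_i = h_(sigma(g)^-1(i)).\<close>
definition wreath :: "('h, 'a) monoid_scheme \<Rightarrow> ('g, 'b) monoid_scheme \<Rightarrow> nat
                       \<Rightarrow> ('g \<Rightarrow> nat \<Rightarrow> nat) \<Rightarrow> ((nat \<Rightarrow> 'h) \<times> 'g) monoid" where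
  "wreath H G n \<sigma> =
     \<lparr> carrier = ({1..n} \<rightarrow>\<^sub>E carrier H) \<times> carrier G,
       monoid.mult = (\<lambda>(h, g) (h', g').
                 ((\<lambda>i\<in>{1..n}. h i \<otimes>\<^bsub>H\<^esub> h' (inv_into UNIV (\<sigma> g) i)), g \<otimes>\<^bsub>G\<^esub> g')),
       monoid.one = ((\<lambda>i\<in>{1..n}. \<one>\<^bsub>H\<^esub>), \<one>\<^bsub>G\<^esub>) \<rparr>"

definition base_group :: "('h, 'a) monoid_scheme \<Rightarrow> ('g, 'b) monoid_scheme \<Rightarrow> nat
                          \<Rightarrow> ((nat \<Rightarrow> 'h) \<times> 'g) set" where
  "base_group H G n = ({1..n} \<rightarrow>\<^sub>E carrier H) \<times> {\<one>\<^bsub>G\<^esub>}"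

definition wr_proj :: "(nat \<Rightarrow> 'h) \<times> 'g \<Rightarrow> 'g" where
  "wr_proj = snd"

definition characteristic :: "('a, 'm) monoid_scheme \<Rightarrow> 'a set \<Rightarrow> bool" where
  "characteristic G K \<longleftrightarrow> subgroup K G \<and> (\<forall>\<phi> \<in> iso G G. \<phi> ` K = K)"

definition fin_gen_group :: "('a, 'm) monoid_scheme \<Rightarrow> bool" where
  "fin_gen_group G \<longleftrightarrow> (\<exists>S. finite S \<and> S \<subseteq> carrier G \<and> generate G S = carrier G)"

end

theory Submission imports Defs begin

(* Since H is abelian, the base group H^n = ker \<pi> is an abelian normal subgroup of W; by hypothesis
   it is the largest one, hence characteristic. So every automorphism \<phi> of W descends along the
   surjection \<pi> to an automorphism \<psi> of G with \<pi> \<circ> \<phi> = \<psi> \<circ> \<pi>. As \<psi> fixes the characteristic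
   subgroup P = ker \<sigma>, \<phi> fixes the preimage of P. Over P the coordinates are not permuted, so on
   that preimage the wreath multiplication is simply that of H^n \<times> P. *)

lemma characteristic_if_greatest_abelian_normal:
  assumes W: "group W" and N: "N \<lhd> W" and N_ab: "comm_group (W\<lparr>carrier := N\<rparr>)"
    and greatest: "\<And>M. M \<lhd> W \<Longrightarrow> comm_group (W\<lparr>carrier := M\<rparr>) \<Longrightarrow> M \<subseteq> N"
  shows "characteristic W N"
proof -
  have image_le: "\<phi> ` N \<subseteq> N" if \<phi>: "\<phi> \<in> iso W W" for \<phi>
  proof (rule greatest)
    show "\<phi> ` N \<lhd> W" by (rule iso_normal_subgroup[OF \<phi> W W N])
    interpret \<phi>: group_hom W W \<phi>
      using W \<phi> by (simp add: group_hom_def group_hom_axioms_def iso_imp_homomorphism)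
    have "\<phi> \<in> hom (W\<lparr>carrier := N\<rparr>) W"
      using subgroup.subset[OF normal_imp_subgroup[OF N]] by (auto simp: hom_def subset_iff)
    then have "comm_group (W\<lparr>carrier := \<phi> ` carrier (W\<lparr>carrier := N\<rparr>),
                           one := \<phi> \<one>\<^bsub>W\<lparr>carrier := N\<rparr>\<^esub>\<rparr>)"
      by (rule comm_group.hom_imp_img_comm_group[OF N_ab])
    then show "comm_group (W\<lparr>carrier := \<phi> ` N\<rparr>)" by simp
  qed
  show ?thesis
    unfolding characteristic_def
  proof (intro conjI ballI equalityI)
    show "subgroup N W" by (rule normal_imp_subgroup[OF N])
    fix \<phi> assume \<phi>: "\<phi> \<in> iso W W"
    show "\<phi> ` N \<subseteq> N" by (rule image_le[OF \<phi>])
    show "N \<subseteq> \<phi> ` N"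
    proof
      fix x assume x: "x \<in> N"
      have "inv_into (carrier W) \<phi> ` N \<subseteq> N"
        by (rule image_le[OF group.iso_set_sym[OF W \<phi>]])
      then have "inv_into (carrier W) \<phi> x \<in> N" using x by blast
      moreover have "x \<in> \<phi> ` carrier W"
        using x subgroup.subset[OF normal_imp_subgroup[OF N]] \<phi> by (auto simp: Group.iso_iff)
      ultimately show "x \<in> \<phi> ` N" by (metis f_inv_into_f imageI)
    qed
  qed
qed

lemma (in group_hom) subgroup_vimage:
  assumes "subgroup K H"
  shows "subgroup (h -` K \<inter> carrier G) G"
proof (rule G.subgroupI)
  show "h -` K \<inter> carrier G \<noteq> {}"
    using subgroup.one_closed[OF assms] by force
  show "inv a \<in> h -` K \<inter> carrier G" if "a \<in> h -` K \<inter> carrier G" for a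
    using that subgroup.m_inv_closed[OF assms] by simp
  show "a \<otimes> b \<in> h -` K \<inter> carrier G"
    if "a \<in> h -` K \<inter> carrier G" "b \<in> h -` K \<inter> carrier G" for a b
    using that subgroup.m_closed[OF assms] by simp
qed auto

lemma (in group_hom) kernel_preserving_endo_respects_fibres:
  assumes \<phi>: "\<phi> \<in> hom G G" and ker: "\<phi> ` kernel G H h \<subseteq> kernel G H h"
    and x: "x \<in> carrier G" and y: "y \<in> carrier G" and "h x = h y"
  shows "h (\<phi> x) = h (\<phi> y)"
proof -
  interpret \<phi>: group_hom G G \<phi>
    using \<phi> by (simp add: group_hom_def group_hom_axioms_def is_group)
  have "inv x \<otimes> y \<in> kernel G H h"
    using x y \<open>h x = h y\<close> by (simp add: kernel_def)
  then have "\<phi> (inv x \<otimes> y) \<in> kernel G H h" using ker by blast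
  then have "inv\<^bsub>H\<^esub> h (\<phi> x) \<otimes>\<^bsub>H\<^esub> h (\<phi> y) = \<one>\<^bsub>H\<^esub>"
    using x y by (simp add: kernel_def)
  then show ?thesis
    using x y by (metis H.inv_equality H.inv_inv H.inv_closed hom_closed \<phi>.hom_closed)
qed

lemma (in group_hom) endomorphism_descends:
  assumes surj: "h ` carrier G = carrier H" and \<phi>: "\<phi> \<in> hom G G"
    and ker: "\<phi> ` kernel G H h \<subseteq> kernel G H h"
  obtains \<psi> where "\<psi> \<in> hom H H" and "\<And>x. x \<in> carrier G \<Longrightarrow> h (\<phi> x) = \<psi> (h x)"
proof -
  interpret \<phi>: group_hom G G \<phi>
    using \<phi> by (simp add: group_hom_def group_hom_axioms_def is_group)
  define \<psi> where "\<psi> y = h (\<phi> (inv_into (carrier G) h y))" for y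
  have compat: "h (\<phi> x) = \<psi> (h x)" if x: "x \<in> carrier G" for x
  proof -
    let ?x' = "inv_into (carrier G) h (h x)"
    have "h x \<in> h ` carrier G" using x by (rule imageI)
    then have "?x' \<in> carrier G" "h ?x' = h x"
      by (rule inv_into_into, rule f_inv_into_f)
    then show ?thesis
      unfolding \<psi>_def
      using kernel_preserving_endo_respects_fibres[OF \<phi> ker _ x] by simp
  qed
  have lift: "\<exists>x \<in> carrier G. y = h x" if "y \<in> carrier H" for y
    using that surj by auto
  have "\<psi> \<in> hom H H"
  proof (rule homI)
    fix y assume "y \<in> carrier H"
    then obtain x where x: "x \<in> carrier G" "y = h x" using lift by blast
    then have "\<psi> y = h (\<phi> x)" by (simp only: compat)
    then show "\<psi> y \<in> carrier H" using x by simp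
  next
    fix y y' assume "y \<in> carrier H" "y' \<in> carrier H"
    then obtain x x' where x: "x \<in> carrier G" "y = h x" and x': "x' \<in> carrier G" "y' = h x'"
      using lift by blast
    have "\<psi> (y \<otimes>\<^bsub>H\<^esub> y') = \<psi> (h (x \<otimes> x'))" using x x' by simp
    also have "\<dots> = h (\<phi> (x \<otimes> x'))" using x x' by (simp only: compat G.m_closed)
    also have "\<dots> = h (\<phi> x) \<otimes>\<^bsub>H\<^esub> h (\<phi> x')" using x x' by simp
    also have "\<dots> = \<psi> y \<otimes>\<^bsub>H\<^esub> \<psi> y'" using x x' by (simp only: compat)
    finally show "\<psi> (y \<otimes>\<^bsub>H\<^esub> y') = \<psi> y \<otimes>\<^bsub>H\<^esub> \<psi> y'" .
  qed
  then show thesis using compat by (rule that)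
qed

lemma (in group_hom) automorphism_descends:
  assumes surj: "h ` carrier G = carrier H" and \<phi>: "\<phi> \<in> iso G G"
    and ker: "\<phi> ` kernel G H h = kernel G H h"
  obtains \<psi> where "\<psi> \<in> iso H H" and "\<And>x. x \<in> carrier G \<Longrightarrow> h (\<phi> x) = \<psi> (h x)"
proof -
  obtain \<psi> where \<psi>: "\<psi> \<in> hom H H" and compat: "\<And>x. x \<in> carrier G \<Longrightarrow> h (\<phi> x) = \<psi> (h x)"
    using endomorphism_descends[OF surj iso_imp_homomorphism[OF \<phi>]] ker by blast
  interpret \<psi>: group_hom H H \<psi>
    using \<psi> by (simp add: group_hom_def group_hom_axioms_def H.is_group)
  have "\<psi> \<in> iso H H"
    unfolding \<psi>.iso_iff
  proof (intro conjI ballI impI subsetI)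
    fix y assume "y \<in> carrier H"
    then obtain z where z: "z \<in> carrier G" "y = h z" using surj by blast
    then have "z \<in> \<phi> ` carrier G" using \<phi> by (simp add: Group.iso_iff)
    then obtain x where x: "x \<in> carrier G" "z = \<phi> x" by (rule imageE)
    then have "y = \<psi> (h x)" using z(2) compat by simp
    then show "y \<in> \<psi> ` carrier H" by (rule image_eqI) (simp add: x)
  next
    fix y assume y: "y \<in> carrier H" "\<psi> y = \<one>\<^bsub>H\<^esub>"
    then obtain x where x: "x \<in> carrier G" "y = h x" using surj by blast
    then have "h (\<phi> x) = \<one>\<^bsub>H\<^esub>" using y(2) by (simp only: compat)
    then have "\<phi> x \<in> kernel G H h" using hom_in_carrier[OF iso_imp_homomorphism[OF \<phi>] x(1)] by (simp add: kernel_def)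
    then obtain k where k: "k \<in> kernel G H h" "\<phi> x = \<phi> k" using ker by blast
    moreover have "inj_on \<phi> (carrier G)" using \<phi> by (simp add: Group.iso_iff)
    ultimately have "x = k" using x by (auto simp: kernel_def dest: inj_onD)
    then show "y = \<one>\<^bsub>H\<^esub>" using k x by (simp add: kernel_def)
  qed
  then show thesis using compat by (rule that)
qed

lemma (in group_hom) characteristic_vimage:
  assumes surj: "h ` carrier G = carrier H"
    and ker_char: "characteristic G (kernel G H h)" and K_char: "characteristic H K"
  shows "characteristic G (h -` K \<inter> carrier G)"
  unfolding characteristic_def
proof (intro conjI ballI)
  show "subgroup (h -` K \<inter> carrier G) G"
    using K_char subgroup_vimage by (simp add: characteristic_def)
  fix \<phi> assume \<phi>: "\<phi> \<in> iso G G"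
  obtain \<psi> where \<psi>: "\<psi> \<in> iso H H" and compat: "\<And>x. x \<in> carrier G \<Longrightarrow> h (\<phi> x) = \<psi> (h x)"
    using automorphism_descends[OF surj \<phi>] ker_char \<phi> by (auto simp: characteristic_def)
  have \<psi>K: "\<psi> ` K = K" and K_sub: "K \<subseteq> carrier H"
    using K_char \<psi> by (auto simp: characteristic_def dest: subgroup.subset)
  have \<phi>_car: "\<phi> ` carrier G = carrier G" using \<phi> by (simp add: Group.iso_iff)
  have \<psi>_inj: "inj_on \<psi> (carrier H)" using \<psi> by (simp add: Group.iso_iff)
  show "\<phi> ` (h -` K \<inter> carrier G) = h -` K \<inter> carrier G"
  proof (intro equalityI subsetI)
    fix y assume "y \<in> \<phi> ` (h -` K \<inter> carrier G)"
    then obtain x where "x \<in> carrier G" "h x \<in> K" "y = \<phi> x" by blast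
    then show "y \<in> h -` K \<inter> carrier G"
      using compat \<psi>K \<phi>_car by blast
  next
    fix y assume y: "y \<in> h -` K \<inter> carrier G"
    then obtain x where x: "x \<in> carrier G" "y = \<phi> x" using \<phi>_car by blast
    then have "\<psi> (h x) \<in> \<psi> ` K" using y compat \<psi>K by simp
    then have "h x \<in> K"
      using x K_sub \<psi>_inj by (auto dest: inj_onD)
    then show "y \<in> \<phi> ` (h -` K \<inter> carrier G)" using x by blast
  qed
qed

locale perm_wreath =
  fixes H :: "('h, 'a) monoid_scheme" and G :: "('g, 'b) monoid_scheme"
    and n :: nat and \<sigma> :: "'g \<Rightarrow> nat \<Rightarrow> nat"
  assumes group_H: "group H" and group_G: "group G" and \<sigma>_hom: "\<sigma> \<in> hom G (sym_group n)"
begin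

sublocale H: group H by (rule group_H)
sublocale G: group G by (rule group_G)

abbreviation W where "W \<equiv> wreath H G n \<sigma>"
abbreviation \<tau> where "\<tau> g \<equiv> inv_into UNIV (\<sigma> g)"

lemma wreath_carrier: "carrier W = ({1..n} \<rightarrow>\<^sub>E carrier H) \<times> carrier G"
  by (simp add: wreath_def)

lemma wreath_mult:
  "(h, g) \<otimes>\<^bsub>W\<^esub> (h', g') = ((\<lambda>i\<in>{1..n}. h i \<otimes>\<^bsub>H\<^esub> h' (\<tau> g i)), g \<otimes>\<^bsub>G\<^esub> g')"
  by (simp add: wreath_def)

lemma wreath_one: "\<one>\<^bsub>W\<^esub> = ((\<lambda>i\<in>{1..n}. \<one>\<^bsub>H\<^esub>), \<one>\<^bsub>G\<^esub>)"
  by (simp add: wreath_def)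

lemma sigma_group_hom: "group_hom G (sym_group n) \<sigma>"
  using group_G \<sigma>_hom sym_group_is_group by (simp add: group_hom_def group_hom_axioms_def)

lemma permutes_sigma: "g \<in> carrier G \<Longrightarrow> \<sigma> g permutes {1..n}"
  using group_hom.hom_closed[OF sigma_group_hom] by (simp add: sym_group_carrier)

lemma tau_in: "g \<in> carrier G \<Longrightarrow> i \<in> {1..n} \<Longrightarrow> \<tau> g i \<in> {1..n}"
  by (metis permutes_in_image permutes_inv permutes_sigma)

lemma tau_mult:
  assumes "g \<in> carrier G" and "g' \<in> carrier G"
  shows "\<tau> (g \<otimes>\<^bsub>G\<^esub> g') = \<tau> g' \<circ> \<tau> g"
  using assms group_hom.hom_mult[OF sigma_group_hom]
    o_inv_distrib[OF permutes_bij permutes_bij, OF permutes_sigma permutes_sigma]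
  by (simp add: sym_group_mult)

lemma tau_one: "\<tau> \<one>\<^bsub>G\<^esub> = id"
  using group_hom.hom_one[OF sigma_group_hom] by (simp add: sym_group_one inv_id)

lemma tau_inv:
  assumes "g \<in> carrier G"
  shows "\<tau> (inv\<^bsub>G\<^esub> g) = \<sigma> g"
  using assms group_hom.hom_inv[OF sigma_group_hom] group_hom.hom_closed[OF sigma_group_hom]
    inv_inv_eq[OF permutes_bij[OF permutes_sigma]]
  by simp

lemma wreath_group: "group W"
proof (rule groupI)
  show "\<one>\<^bsub>W\<^esub> \<in> carrier W" by (simp add: wreath_one wreath_carrier)
next
  fix x y assume "x \<in> carrier W" "y \<in> carrier W"
  then show "x \<otimes>\<^bsub>W\<^esub> y \<in> carrier W"
    using tau_in by (cases x, cases y) (auto simp: wreath_mult wreath_carrier PiE_def Pi_def)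
next
  fix x y z assume "x \<in> carrier W" "y \<in> carrier W" "z \<in> carrier W"
  then show "x \<otimes>\<^bsub>W\<^esub> y \<otimes>\<^bsub>W\<^esub> z = x \<otimes>\<^bsub>W\<^esub> (y \<otimes>\<^bsub>W\<^esub> z)"
    by (cases x, cases y, cases z)
      (use tau_in in \<open>auto simp: wreath_mult wreath_carrier PiE_def Pi_def tau_mult
          H.m_assoc G.m_assoc intro!: ext\<close>)
next
  fix x assume "x \<in> carrier W"
  then show "\<one>\<^bsub>W\<^esub> \<otimes>\<^bsub>W\<^esub> x = x"
    by (cases x) (auto simp: wreath_one wreath_mult wreath_carrier tau_one PiE_def Pi_def extensional_def
        intro!: ext)
next
  fix x assume "x \<in> carrier W"
  then obtain h g where x: "x = (h, g)" and h: "h \<in> {1..n} \<rightarrow>\<^sub>E carrier H" and g: "g \<in> carrier G"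
    by (auto simp: wreath_carrier)
  have h_sigma: "h (\<sigma> g i) \<in> carrier H" if "i \<in> {1..n}" for i
    using that h g permutes_in_image[OF permutes_sigma] by blast
  let ?y = "((\<lambda>i\<in>{1..n}. inv\<^bsub>H\<^esub> h (\<sigma> g i)), inv\<^bsub>G\<^esub> g)"
  have "?y \<in> carrier W" using h_sigma g by (simp add: wreath_carrier)
  moreover have "?y \<otimes>\<^bsub>W\<^esub> x = \<one>\<^bsub>W\<^esub>"
    using h_sigma g by (auto simp: x wreath_mult wreath_one tau_inv)
  ultimately show "\<exists>y \<in> carrier W. y \<otimes>\<^bsub>W\<^esub> x = \<one>\<^bsub>W\<^esub>" by blast
qed

sublocale wr_proj: group_hom W G wr_proj
  using wreath_group group_G
  by (auto simp: group_hom_def group_hom_axioms_def hom_def wreath_carrier wreath_mult wr_proj_def)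

lemma wr_proj_surj: "wr_proj ` carrier W = carrier G"
proof (intro equalityI subsetI)
  fix g assume "g \<in> carrier G"
  then have "((\<lambda>i\<in>{1..n}. \<one>\<^bsub>H\<^esub>), g) \<in> carrier W" by (simp add: wreath_carrier)
  then show "g \<in> wr_proj ` carrier W" by (rule image_eqI[rotated]) (simp add: wr_proj_def)
qed auto

lemma kernel_wr_proj: "kernel W G wr_proj = base_group H G n"
  by (auto simp: base_group_def kernel_def wreath_carrier wr_proj_def)

lemma base_group_comm_group:
  assumes "comm_group H"
  shows "comm_group (W\<lparr>carrier := base_group H G n\<rparr>)"
proof -
  interpret H: comm_group H by (rule assms)
  interpret B: group "W\<lparr>carrier := base_group H G n\<rparr>"
    using subgroup.subgroup_is_group[OF wr_proj.subgroup_kernel wreath_group]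
    by (simp add: kernel_wr_proj)
  show ?thesis
  proof (rule B.group_comm_groupI)
    fix x y assume "x \<in> carrier (W\<lparr>carrier := base_group H G n\<rparr>)"
      "y \<in> carrier (W\<lparr>carrier := base_group H G n\<rparr>)"
    then show "x \<otimes>\<^bsub>W\<lparr>carrier := base_group H G n\<rparr>\<^esub> y = y \<otimes>\<^bsub>W\<lparr>carrier := base_group H G n\<rparr>\<^esub> x"
      using H.m_comm by (auto simp: base_group_def wreath_mult tau_one PiE_def Pi_def intro!: ext)
  qed
qed

lemma wr_proj_vimage_kernel_iso:
  "W\<lparr>carrier := wr_proj -` kernel G (sym_group n) \<sigma> \<inter> carrier W\<rparr>
     \<cong> pow_group H n \<times>\<times> G\<lparr>carrier := kernel G (sym_group n) \<sigma>\<rparr>"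
proof (rule is_isoI[of "\<lambda>x. x"], rule isoI)
  let ?P = "kernel G (sym_group n) \<sigma>"
  have carrier_eq: "wr_proj -` ?P \<inter> carrier W = ({1..n} \<rightarrow>\<^sub>E carrier H) \<times> ?P"
    by (auto simp: kernel_def wreath_carrier wr_proj_def)
  then show "bij_betw (\<lambda>x. x) (carrier (W\<lparr>carrier := wr_proj -` ?P \<inter> carrier W\<rparr>))
      (carrier (pow_group H n \<times>\<times> G\<lparr>carrier := ?P\<rparr>))"
    by (simp add: pow_group_def bij_betw_def)
  have "\<tau> g = id" if "g \<in> ?P" for g
    using that by (simp add: kernel_def sym_group_one inv_id)
  then show "(\<lambda>x. x) \<in> hom (W\<lparr>carrier := wr_proj -` ?P \<inter> carrier W\<rparr>)
      (pow_group H n \<times>\<times> G\<lparr>carrier := ?P\<rparr>)"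
    using carrier_eq by (auto simp: hom_def pow_group_def wreath_def DirProd_def)
qed

end

theorem theorem3p17:
  fixes H :: "('h, 'a) monoid_scheme" and G :: "('g, 'b) monoid_scheme"
    and n :: nat and \<sigma> :: "'g \<Rightarrow> nat \<Rightarrow> nat"
  assumes n3: "n \<ge> 3"
    and H_ab: "comm_group H"
    and H_fg: "fin_gen_group H"
    and H_nontriv: "carrier H \<noteq> {\<one>\<^bsub>H\<^esub>}"
    and G_grp: "group G"
    and \<sigma>_hom: "\<sigma> \<in> hom G (sym_group n)"
    and \<sigma>_surj: "\<sigma> ` carrier G = carrier (sym_group n)"
    and ab_normal: "\<And>N. N \<lhd> wreath H G n \<sigma> \<Longrightarrow>
                       comm_group ((wreath H G n \<sigma>)\<lparr>carrier := N\<rparr>) \<Longrightarrow>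
                       N \<subseteq> base_group H G n"
    and P_char: "characteristic G (kernel G (sym_group n) \<sigma>)"
  shows "(wreath H G n \<sigma>)\<lparr>carrier := wr_proj -` (kernel G (sym_group n) \<sigma>) \<inter> carrier (wreath H G n \<sigma>)\<rparr>
           \<cong> pow_group H n \<times>\<times> G\<lparr>carrier := kernel G (sym_group n) \<sigma>\<rparr>
       \<and> characteristic (wreath H G n \<sigma>)
           (wr_proj -` (kernel G (sym_group n) \<sigma>) \<inter> carrier (wreath H G n \<sigma>))"
proof -
  interpret perm_wreath H G n \<sigma>
    using H_ab G_grp \<sigma>_hom by (simp add: perm_wreath_def comm_group.axioms(2))
  have "characteristic W (kernel W G wr_proj)"
    using characteristic_if_greatest_abelian_normal[OF wreath_group _ _ ab_normal]
      wr_proj.normal_kernel base_group_comm_group[OF H_ab]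
    by (simp add: kernel_wr_proj)
  then have "characteristic W (wr_proj -` kernel G (sym_group n) \<sigma> \<inter> carrier W)"
    by (rule wr_proj.characteristic_vimage[OF wr_proj_surj _ P_char])
  with wr_proj_vimage_kernel_iso show ?thesis by blast
qed

end
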